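(* Every Tarskian logic $\mathcal{L}=({\bf F}(\Theta,\mathcal{V}),\vdash)$ is characterized by a two-valued RNmatrix, i.e. there is an RNmatrix $\mathcal{M}=(\mathcal{A},\{1\},\mathcal{F})$ over $\Theta$ whose multialgebra $\mathcal{A}$ has universe $\{0,1\}$ such that for all $\Gamma\cup\{\varphi\}$, $\Gamma\vdash\varphi$ iff $\Gamma\vDash^{\mathsf{RN}}_{\mathcal{M}}\varphi$. If in addition $\mathcal{L}$ is structural, then $\mathcal{M}$ can be chosen structural.
   Context: A logic $({\bf F}(\Theta,\mathcal{V}),\vdash)$ over the formula algebra of a signature $\Theta$ (with denumerable set $\mathcal{V}$ of variables) is Tarskian if $\vdash$ is reflexive ($\varphi\in\Gamma\Rightarrow\Gamma\vdash\varphi$), monotone, and satisfies cut (if $\Gamma\vdash\delta$ for all $\delta\in\Delta$ and $\Delta\vdash\psi$ then $\Gamma\vdash\psi$); structural if closed under substitutions (endomorphisms of the formula algebra). A $\Theta$-multialgebra assigns to each $n$-ary connective $\sigma$ a function $\sigma_{\mathcal{A}}:A^n\to\wp(A)\setminus\{\emptyset\}$; a valuation is $\nu:{\bf F}(\Theta,\mathcal{V})\to A$ with $\nu(\sigma(\varphi_1,\dots,\varphi_n))\in\sigma_{\mathcal{A}}(\nu(\varphi_1),\dots,\nu(\varphi_n))$. An RNmatrix is $(\mathcal{A},D,\mathcal{F})$ with $\emptyset\neq D\subseteq A$ and $\mathcal{F}$ a set of valuations; it is structural if $\nu\circ\rho\in\mathcal{F}$ whenever $\nu\in\mathcal{F}$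 and $\rho$ is a substitution; $\Gamma\vDash^{\mathsf{RN}}_{\mathcal{M}}\varphi$ iff every $\nu\in\mathcal{F}$ with $\nu[\Gamma]\subseteq D$ has $\nu(\varphi)\in D$. *)

theory Defs
  imports Main
begin

text \<open>Formulas over a signature Theta: connectives of type 'c with arity function ar,
  denumerably many variables (indexed by nat).\<close>
datatype 'c form = Var nat | Op 'c "'c form list"

fun wff :: "('c \<Rightarrow> nat) \<Rightarrow> 'c form \<Rightarrow> bool" where
  "wff ar (Var n) = True"
| "wff ar (Op c args) = (length args = ar c \<and> (\<forall>a\<in>set args. wff ar a))"

definition Fm :: "('c \<Rightarrow> nat) \<Rightarrow> 'c form set" where
  "Fm ar = {\<phi>. wff ar \<phi>}"

fun subst :: "(nat \<Rightarrow> 'c form) \<Rightarrow> 'c form \<Rightarrow> 'c form" where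
  "subst \<sigma> (Var n) = \<sigma> n"
| "subst \<sigma> (Op c args) = Op c (map (subst \<sigma>) args)"

definition is_subst :: "('c \<Rightarrow> nat) \<Rightarrow> (nat \<Rightarrow> 'c form) \<Rightarrow> bool" where
  "is_subst ar \<sigma> = (\<forall>n. wff ar (\<sigma> n))"

definition tarskian :: "('c \<Rightarrow> nat) \<Rightarrow> ('c form set \<Rightarrow> 'c form \<Rightarrow> bool) \<Rightarrow> bool" where
  "tarskian ar der =
    ((\<forall>\<Gamma> \<phi>. \<Gamma> \<subseteq> Fm ar \<and> \<phi> \<in> \<Gamma> \<longrightarrow> der \<Gamma> \<phi>) \<and>
     (\<forall>\<Gamma> \<Delta> \<phi>. \<Gamma> \<subseteq> \<Delta> \<and> \<Delta> \<subseteq> Fm ar \<and> \<phi> \<in> Fm ar \<and> der \<Gamma> \<phi> \<longrightarrow> der \<Delta> \<phi>) \<and>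
     (\<forall>\<Gamma> \<Delta> \<psi>. \<Gamma> \<subseteq> Fm ar \<and> \<Delta> \<subseteq> Fm ar \<and> \<psi> \<in> Fm ar \<and>
        (\<forall>\<delta>\<in>\<Delta>. der \<Gamma> \<delta>) \<and> der \<Delta> \<psi> \<longrightarrow> der \<Gamma> \<psi>))"

definition structural_logic :: "('c \<Rightarrow> nat) \<Rightarrow> ('c form set \<Rightarrow> 'c form \<Rightarrow> bool) \<Rightarrow> bool" where
  "structural_logic ar der =
    (\<forall>\<sigma> \<Gamma> \<phi>. is_subst ar \<sigma> \<and> \<Gamma> \<subseteq> Fm ar \<and> \<phi> \<in> Fm ar \<and> der \<Gamma> \<phi>
        \<longrightarrow> der (subst \<sigma> ` \<Gamma>) (subst \<sigma> \<phi>))"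

definition multialgebra :: "('c \<Rightarrow> nat) \<Rightarrow> 'v set \<Rightarrow> ('c \<Rightarrow> 'v list \<Rightarrow> 'v set) \<Rightarrow> bool" where
  "multialgebra ar A ops =
    (\<forall>c xs. length xs = ar c \<and> set xs \<subseteq> A \<longrightarrow> ops c xs \<noteq> {} \<and> ops c xs \<subseteq> A)"

text \<open>Convention: valuations are functions on all (raw) terms; on ill-formed
  terms (which are not formulas) they take a fixed junk value, so that each valuation
  F(Theta,V) -> A corresponds to exactly one HOL function.\<close>
definition valuation :: "('c \<Rightarrow> nat) \<Rightarrow> 'v set \<Rightarrow> ('c \<Rightarrow> 'v list \<Rightarrow> 'v set) \<Rightarrow> ('c form \<Rightarrow> 'v) \<Rightarrow> bool" where
  "valuation ar A ops \<nu> =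
    ((\<forall>\<phi>. \<phi> \<in> Fm ar \<longrightarrow> \<nu> \<phi> \<in> A) \<and>
     (\<forall>\<phi>. \<phi> \<notin> Fm ar \<longrightarrow> \<nu> \<phi> = undefined) \<and>
     (\<forall>c args. Op c args \<in> Fm ar \<longrightarrow> \<nu> (Op c args) \<in> ops c (map \<nu> args)))"

definition rnmatrix :: "('c \<Rightarrow> nat) \<Rightarrow> 'v set \<Rightarrow> ('c \<Rightarrow> 'v list \<Rightarrow> 'v set) \<Rightarrow> 'v set
    \<Rightarrow> ('c form \<Rightarrow> 'v) set \<Rightarrow> bool" where
  "rnmatrix ar A ops D F =
    (multialgebra ar A ops \<and> D \<noteq> {} \<and> D \<subseteq> A \<and> (\<forall>\<nu>\<in>F. valuation ar A ops \<nu>))"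

definition structural_rn :: "('c \<Rightarrow> nat) \<Rightarrow> ('c form \<Rightarrow> 'v) set \<Rightarrow> bool" where
  "structural_rn ar F = (\<forall>\<nu>\<in>F. \<forall>\<sigma>. is_subst ar \<sigma> \<longrightarrow> \<nu> \<circ> subst \<sigma> \<in> F)"

definition rn_conseq :: "'v set \<Rightarrow> ('c form \<Rightarrow> 'v) set \<Rightarrow> 'c form set \<Rightarrow> 'c form \<Rightarrow> bool" where
  "rn_conseq D F \<Gamma> \<phi> = (\<forall>\<nu>\<in>F. \<nu> ` \<Gamma> \<subseteq> D \<longrightarrow> \<nu> \<phi> \<in> D)"

end

theory Submission
  imports Defs
begin

text \<open>The valuations of the matrix are the characteristic functions of the closed theories of
  the logic, and every connective is interpreted by the full multioperation on \<open>{0, 1}\<close>.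
  If \<open>\<Gamma> \<turnstile> \<phi>\<close>, every closed theory containing \<open>\<Gamma>\<close> contains \<open>\<phi>\<close> by monotonicity; conversely
  the consequences of \<open>\<Gamma>\<close> form a closed theory by reflexivity and cut, and it contains \<open>\<phi>\<close>
  only if \<open>\<Gamma> \<turnstile> \<phi>\<close>. For a structural logic the inverse image of a closed theory under a
  substitution is again closed, which makes the set of valuations closed under substitution.\<close>

lemma tarskianD_refl:
  assumes "tarskian ar der" and "\<Gamma> \<subseteq> Fm ar" and "\<phi> \<in> \<Gamma>"
  shows "der \<Gamma> \<phi>"
  using assms(1)[unfolded tarskian_def, THEN conjunct1] assms(2,3) by blast

lemma tarskianD_mono:
  assumes "tarskian ar der" and "\<Gamma> \<subseteq> \<Delta>" and "\<Delta> \<subseteq> Fm ar" and "\<phi> \<in> Fm ar" and "der \<Gamma> \<phi>"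
  shows "der \<Delta> \<phi>"
  using assms(1)[unfolded tarskian_def, THEN conjunct2, THEN conjunct1] assms(2-) by blast

lemma tarskianD_cut:
  assumes "tarskian ar der" and "\<Gamma> \<subseteq> Fm ar" and "\<Delta> \<subseteq> Fm ar" and "\<psi> \<in> Fm ar"
    and "\<forall>\<delta>\<in>\<Delta>. der \<Gamma> \<delta>" and "der \<Delta> \<psi>"
  shows "der \<Gamma> \<psi>"
  using assms(1)[unfolded tarskian_def, THEN conjunct2, THEN conjunct2] assms(2-) by blast

lemma subst_in_Fm_iff: "is_subst ar \<sigma> \<Longrightarrow> subst \<sigma> \<psi> \<in> Fm ar \<longleftrightarrow> \<psi> \<in> Fm ar"
  unfolding Fm_def by (induction \<psi>) (auto simp: is_subst_def)

definition closed_theory :: "('c \<Rightarrow> nat) \<Rightarrow> ('c form set \<Rightarrow> 'c form \<Rightarrow> bool) \<Rightarrow> 'c form set \<Rightarrow> bool" where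
  "closed_theory ar der T \<longleftrightarrow> T \<subseteq> Fm ar \<and> (\<forall>\<psi>\<in>Fm ar. der T \<psi> \<longrightarrow> \<psi> \<in> T)"

definition consequences :: "('c \<Rightarrow> nat) \<Rightarrow> ('c form set \<Rightarrow> 'c form \<Rightarrow> bool) \<Rightarrow> 'c form set \<Rightarrow> 'c form set" where
  "consequences ar der \<Gamma> = {\<psi> \<in> Fm ar. der \<Gamma> \<psi>}"

lemma closed_theory_consequences:
  assumes L: "tarskian ar der" and \<Gamma>: "\<Gamma> \<subseteq> Fm ar"
  shows "closed_theory ar der (consequences ar der \<Gamma>)"
  unfolding closed_theory_def
proof (intro conjI ballI impI)
  show "consequences ar der \<Gamma> \<subseteq> Fm ar"
    by (auto simp: consequences_def)
  fix \<psi> assume "\<psi> \<in> Fm ar" and "der (consequences ar der \<Gamma>) \<psi>"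
  moreover have "\<forall>\<delta>\<in>consequences ar der \<Gamma>. der \<Gamma> \<delta>"
    by (simp add: consequences_def)
  ultimately have "der \<Gamma> \<psi>"
    using tarskianD_cut[OF L \<Gamma>] \<open>consequences ar der \<Gamma> \<subseteq> Fm ar\<close> by blast
  with \<open>\<psi> \<in> Fm ar\<close> show "\<psi> \<in> consequences ar der \<Gamma>"
    by (simp add: consequences_def)
qed

lemma subset_consequences:
  "tarskian ar der \<Longrightarrow> \<Gamma> \<subseteq> Fm ar \<Longrightarrow> \<Gamma> \<subseteq> consequences ar der \<Gamma>"
  unfolding consequences_def using tarskianD_refl by blast

lemma structural_logicD:
  "structural_logic ar der \<Longrightarrow> is_subst ar \<sigma> \<Longrightarrow> \<Gamma> \<subseteq> Fm ar \<Longrightarrow> \<phi> \<in> Fm ar \<Longrightarrow> der \<Gamma> \<phi>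
    \<Longrightarrow> der (subst \<sigma> ` \<Gamma>) (subst \<sigma> \<phi>)"
  unfolding structural_logic_def by (elim allE impE) (intro conjI)

lemma closed_theory_vimage_subst:
  assumes L: "tarskian ar der" and S: "structural_logic ar der" and \<sigma>: "is_subst ar \<sigma>"
    and T: "closed_theory ar der T"
  shows "closed_theory ar der {\<psi> \<in> Fm ar. subst \<sigma> \<psi> \<in> T}" (is "closed_theory ar der ?T'")
  unfolding closed_theory_def
proof (intro conjI ballI impI)
  show "?T' \<subseteq> Fm ar" by blast
  fix \<psi> assume \<psi>: "\<psi> \<in> Fm ar" and "der ?T' \<psi>"
  with S \<sigma> \<open>?T' \<subseteq> Fm ar\<close> have "der (subst \<sigma> ` ?T') (subst \<sigma> \<psi>)"
    by (rule structural_logicD)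
  moreover have "subst \<sigma> ` ?T' \<subseteq> T" and "T \<subseteq> Fm ar" and "subst \<sigma> \<psi> \<in> Fm ar"
    using T \<psi> subst_in_Fm_iff[OF \<sigma>] by (auto simp: closed_theory_def)
  ultimately have "der T (subst \<sigma> \<psi>)"
    using tarskianD_mono[OF L] by blast
  with T \<psi> \<open>subst \<sigma> \<psi> \<in> Fm ar\<close> show "\<psi> \<in> ?T'"
    by (simp add: closed_theory_def)
qed

text \<open>Off the formulas the value is \<open>undefined\<close>, as the definition of valuations requires.\<close>

definition char_valuation :: "('c \<Rightarrow> nat) \<Rightarrow> 'c form set \<Rightarrow> 'c form \<Rightarrow> nat" where
  "char_valuation ar T \<psi> = (if \<psi> \<in> Fm ar then (if \<psi> \<in> T then 1 else 0) else undefined)"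

lemma char_valuation_eq_1_iff:
  "\<psi> \<in> Fm ar \<Longrightarrow> char_valuation ar T \<psi> = 1 \<longleftrightarrow> \<psi> \<in> T"
  by (simp add: char_valuation_def)

lemma char_valuation_comp_subst:
  "is_subst ar \<sigma> \<Longrightarrow>
    char_valuation ar T \<circ> subst \<sigma> = char_valuation ar {\<psi> \<in> Fm ar. subst \<sigma> \<psi> \<in> T}"
  by (auto simp: char_valuation_def fun_eq_iff subst_in_Fm_iff)

definition char_valuations :: "('c \<Rightarrow> nat) \<Rightarrow> ('c form set \<Rightarrow> 'c form \<Rightarrow> bool) \<Rightarrow> ('c form \<Rightarrow> nat) set" where
  "char_valuations ar der = char_valuation ar ` {T. closed_theory ar der T}"

lemma rnmatrix_char_valuations:
  "rnmatrix ar {0, 1} (\<lambda>c xs. {0, 1}) {1} (char_valuations ar der)"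
  unfolding rnmatrix_def multialgebra_def valuation_def char_valuations_def char_valuation_def
  by auto

lemma der_iff_rn_conseq_char_valuations:
  assumes L: "tarskian ar der" and \<Gamma>: "\<Gamma> \<subseteq> Fm ar" and \<phi>: "\<phi> \<in> Fm ar"
  shows "der \<Gamma> \<phi> \<longleftrightarrow> rn_conseq {1} (char_valuations ar der) \<Gamma> \<phi>"
proof
  assume "der \<Gamma> \<phi>"
  show "rn_conseq {1} (char_valuations ar der) \<Gamma> \<phi>"
    unfolding rn_conseq_def char_valuations_def
  proof (intro ballI impI)
    fix \<nu> assume "\<nu> \<in> char_valuation ar ` {T. closed_theory ar der T}" and "\<nu> ` \<Gamma> \<subseteq> {1}"
    then obtain T where T: "closed_theory ar der T" and \<nu>: "\<nu> = char_valuation ar T"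
      and "char_valuation ar T ` \<Gamma> \<subseteq> {1}" by blast
    then have "\<Gamma> \<subseteq> T"
      using \<Gamma> char_valuation_eq_1_iff by blast
    with T have "der T \<phi>"
      using tarskianD_mono[OF L _ _ \<phi> \<open>der \<Gamma> \<phi>\<close>] by (auto simp: closed_theory_def)
    then show "\<nu> \<phi> \<in> {1}"
      using T \<nu> \<phi> by (simp add: closed_theory_def char_valuation_def)
  qed
next
  assume "rn_conseq {1} (char_valuations ar der) \<Gamma> \<phi>"
  moreover have "char_valuation ar (consequences ar der \<Gamma>) \<in> char_valuations ar der"
    using closed_theory_consequences[OF L \<Gamma>] by (simp add: char_valuations_def)
  moreover have "char_valuation ar (consequences ar der \<Gamma>) ` \<Gamma> \<subseteq> {1}"
    using subset_consequences[OF L \<Gamma>] \<Gamma> char_valuation_eq_1_iff by blast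
  ultimately have "char_valuation ar (consequences ar der \<Gamma>) \<phi> = 1"
    unfolding rn_conseq_def by blast
  then show "der \<Gamma> \<phi>"
    using \<phi> char_valuation_eq_1_iff unfolding consequences_def by blast
qed

lemma structural_rn_char_valuations:
  assumes "tarskian ar der" and "structural_logic ar der"
  shows "structural_rn ar (char_valuations ar der)"
  unfolding structural_rn_def char_valuations_def
proof (intro ballI allI impI)
  fix \<nu> \<sigma> assume "\<nu> \<in> char_valuation ar ` {T. closed_theory ar der T}" and \<sigma>: "is_subst ar \<sigma>"
  then obtain T where "closed_theory ar der T" and "\<nu> = char_valuation ar T" by blast
  then show "\<nu> \<circ> subst \<sigma> \<in> char_valuation ar ` {T. closed_theory ar der T}"
    using closed_theory_vimage_subst[OF assms \<sigma>] char_valuation_comp_subst[OF \<sigma>] by blast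
qed

theorem mainTheorem2:
  fixes ar :: "'c \<Rightarrow> nat" and der :: "'c form set \<Rightarrow> 'c form \<Rightarrow> bool"
  assumes "tarskian ar der"
  shows "\<exists>(ops :: 'c \<Rightarrow> nat list \<Rightarrow> nat set) F.
           rnmatrix ar {0, 1} ops {1} F \<and>
           (\<forall>\<Gamma> \<phi>. \<Gamma> \<subseteq> Fm ar \<and> \<phi> \<in> Fm ar \<longrightarrow> (der \<Gamma> \<phi> \<longleftrightarrow> rn_conseq {1} F \<Gamma> \<phi>)) \<and>
           (structural_logic ar der \<longrightarrow> structural_rn ar F)"
proof (intro exI conjI allI impI)
  show "rnmatrix ar {0, 1} (\<lambda>c xs. {0, 1}) {1} (char_valuations ar der)"
    by (rule rnmatrix_char_valuations)
  show "der \<Gamma> \<phi> \<longleftrightarrow> rn_conseq {1} (char_valuations ar der) \<Gamma> \<phi>"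
    if "\<Gamma> \<subseteq> Fm ar \<and> \<phi> \<in> Fm ar" for \<Gamma> \<phi>
    using der_iff_rn_conseq_char_valuations[OF assms] that by blast
  show "structural_rn ar (char_valuations ar der)" if "structural_logic ar der"
    using structural_rn_char_valuations[OF assms that] .
qed

end
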